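(* Let $(U,d)$ be an asymmetric pseudometric space, $k\ge 2$, $R^*>0$ the optimal AMMD value, $R'=\min\{d(u,v): d(u,v)\ge R^*/3,\ u,v\in U,\ u\ne v\}$, $R>0$, and let $U'$ be the output of Cluster$(U,d,R)$. Then $d_{\max}(u,v)\ge R$ for all distinct $u,v\in U'$. Additionally, if $R\le R'$, then $U'$ contains a set $S$ with $|S|=k$ and $\operatorname{div}(S)\ge R'\ge R^*/3$.
   Context: An asymmetric pseudometric space $(U,d)$ is a finite set $U$ with $d:U\times U\to\mathbb{R}_{\ge 0}$ such that $d(u,u)=0$ and $d(u,v)\le d(u,w)+d(w,v)$ for all $u,v,w\in U$ ($d$ need not be symmetric). For $S\subseteq U$, $\operatorname{div}(S)=\min_{u,v\in S,\,u\ne v} d(u,v)$; $R^*$ is the maximum of $\operatorname{div}(O)$ over $O\subseteq U$ with $|O|=k$ (with $k\le |U|$). $d_{\max}(u,v)=\max\{d(u,v),d(v,u)\}$. Cluster$(U,d,R)$: initially all points are unmarked; while an unmarked point exists, choose any unmarked point $c$, let $A=\{v\in U\text{ unmarked}: d_{\max}(c,v)<R\}$, mark all points of $A$, and add $c$ to the output set $U'$. It returns $U'$. *)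

theory Defs
  imports Complex_Main
begin

definition asym_pseudometric :: "'a set \<Rightarrow> ('a \<Rightarrow> 'a \<Rightarrow> real) \<Rightarrow> bool" where
  "asym_pseudometric U d \<longleftrightarrow> finite U \<and>
     (\<forall>u\<in>U. \<forall>v\<in>U. d u v \<ge> 0) \<and>
     (\<forall>u\<in>U. d u u = 0) \<and>
     (\<forall>u\<in>U. \<forall>v\<in>U. \<forall>w\<in>U. d u v \<le> d u w + d w v)"

definition dmax :: "('a \<Rightarrow> 'a \<Rightarrow> real) \<Rightarrow> 'a \<Rightarrow> 'a \<Rightarrow> real" where
  "dmax d u v = max (d u v) (d v u)"

definition divers :: "('a \<Rightarrow> 'a \<Rightarrow> real) \<Rightarrow> 'a set \<Rightarrow> real" where
  "divers d S = Min {d u v | u v. u \<in> S \<and> v \<in> S \<and> u \<noteq> v}"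

definition opt_div :: "'a set \<Rightarrow> ('a \<Rightarrow> 'a \<Rightarrow> real) \<Rightarrow> nat \<Rightarrow> real" where
  "opt_div U d k = Max {divers d T | T. T \<subseteq> U \<and> card T = k}"

definition R_prime :: "'a set \<Rightarrow> ('a \<Rightarrow> 'a \<Rightarrow> real) \<Rightarrow> nat \<Rightarrow> real" where
  "R_prime U d k = Min {d u v | u v. u \<in> U \<and> v \<in> U \<and> u \<noteq> v \<and> d u v \<ge> opt_div U d k / 3}"

text \<open>One iteration of Cluster(U,d,R): the state is (marked points, output set);
  an unmarked point c is chosen, all unmarked v with dmax(c,v) < R get marked, c is output.\<close>
inductive cluster_step :: "'a set \<Rightarrow> ('a \<Rightarrow> 'a \<Rightarrow> real) \<Rightarrow> real \<Rightarrow>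
    'a set \<times> 'a set \<Rightarrow> 'a set \<times> 'a set \<Rightarrow> bool" for U d R where
  "c \<in> U \<Longrightarrow> c \<notin> M \<Longrightarrow>
   cluster_step U d R (M, S) (M \<union> {v \<in> U. v \<notin> M \<and> dmax d c v < R}, insert c S)"

text \<open>U' is a possible output of Cluster(U,d,R) (for some sequence of choices):
  starting with nothing marked, run steps until every point is marked.\<close>
definition cluster_output :: "'a set \<Rightarrow> ('a \<Rightarrow> 'a \<Rightarrow> real) \<Rightarrow> real \<Rightarrow> 'a set \<Rightarrow> bool" where
  "cluster_output U d R U' \<longleftrightarrow> (cluster_step U d R)\<^sup>*\<^sup>* ({}, {}) (U, U')"

end

theory Submission
  imports Defs
begin

text \<open>Every unmarked point within d_max-distance R of a chosen centre is marked together
  with it, so a later centre is at distance at least R from all earlier ones, and at the end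
  every point of U lies within distance R of some centre.

  For the second part take an optimal set O and move each o \<in> O to a centre f(o) with
  d_max(f(o), o) < R \<le> R'. By the choice of R', any distance below R' is below R*/3, so
  d(o, f(o)) and d(f(o), o) are below R*/3, and the triangle inequality gives
  d(f(o1), f(o2)) > R* - 2R*/3 = R*/3 for distinct o1, o2. Hence the f(o) are distinct,
  and each of their distances is at least R*/3 and therefore at least R'.\<close>

lemma dmax_commute: "dmax d u v = dmax d v u"
  by (simp add: dmax_def max.commute)

definition cluster_invariant ::
    "'a set \<Rightarrow> ('a \<Rightarrow> 'a \<Rightarrow> real) \<Rightarrow> real \<Rightarrow> 'a set \<times> 'a set \<Rightarrow> bool" where
  "cluster_invariant U d R =
     (\<lambda>(M, S). S \<subseteq> U \<and>
        (\<forall>v\<in>M. \<exists>c\<in>S. dmax d c v < R) \<and>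
        (\<forall>c\<in>S. \<forall>v\<in>U. dmax d c v < R \<longrightarrow> v \<in> M) \<and>
        (\<forall>u\<in>S. \<forall>v\<in>S. u \<noteq> v \<longrightarrow> R \<le> dmax d u v))"

lemma cluster_step_invariant:
  assumes "cluster_step U d R s s'" and "cluster_invariant U d R s"
  shows "cluster_invariant U d R s'"
  using assms(1)
proof cases
  case (1 c M S)
  have inv: "cluster_invariant U d R (M, S)"
    using assms(2) 1 by simp
  \<comment> \<open>c is still unmarked, so no earlier centre lies within distance R of it\<close>
  have far_from_c: "R \<le> dmax d u c" if "u \<in> S" for u
    using inv that 1 by (force simp: cluster_invariant_def)
  then have "\<forall>u\<in>insert c S. \<forall>v\<in>insert c S. u \<noteq> v \<longrightarrow> R \<le> dmax d u v"
    using inv by (auto simp: cluster_invariant_def dmax_commute)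
  then show ?thesis
    using inv 1 unfolding cluster_invariant_def by auto
qed

lemma cluster_output_invariant:
  assumes "cluster_output U d R U'"
  shows "cluster_invariant U d R (U, U')"
proof -
  have "cluster_invariant U d R s" if "(cluster_step U d R)\<^sup>*\<^sup>* ({}, {}) s" for s
    using that
  proof (induction rule: rtranclp_induct)
    case base
    then show ?case by (simp add: cluster_invariant_def)
  next
    case (step s s')
    then show ?case by (blast intro: cluster_step_invariant)
  qed
  then show ?thesis
    using assms unfolding cluster_output_def .
qed

lemma cluster_output_subset:
  "cluster_output U d R U' \<Longrightarrow> U' \<subseteq> U"
  using cluster_output_invariant by (force simp: cluster_invariant_def)

lemma cluster_output_covers:
  "cluster_output U d R U' \<Longrightarrow> v \<in> U \<Longrightarrow> \<exists>c\<in>U'. dmax d c v < R"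
  using cluster_output_invariant by (force simp: cluster_invariant_def)

lemma cluster_output_separated:
  "cluster_output U d R U' \<Longrightarrow> u \<in> U' \<Longrightarrow> v \<in> U' \<Longrightarrow> u \<noteq> v \<Longrightarrow> R \<le> dmax d u v"
  using cluster_output_invariant by (force simp: cluster_invariant_def)

lemma finite_pair_distances:
  "finite S \<Longrightarrow> finite {d u v | u v. u \<in> S \<and> v \<in> S \<and> P u v}"
proof -
  assume "finite S"
  moreover have "{d u v | u v. u \<in> S \<and> v \<in> S \<and> P u v} \<subseteq> case_prod d ` (S \<times> S)"
    by auto
  ultimately show ?thesis
    by (meson finite_SigmaI finite_imageI finite_subset)
qed

lemma divers_le:
  "finite S \<Longrightarrow> u \<in> S \<Longrightarrow> v \<in> S \<Longrightarrow> u \<noteq> v \<Longrightarrow> divers d S \<le> d u v"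
  unfolding divers_def by (rule Min_le) (auto intro: finite_pair_distances)

lemma obtain_distinct_pair:
  assumes "finite S" and "2 \<le> card S"
  obtains u v where "u \<in> S" "v \<in> S" "u \<noteq> v"
  using assms by (metis card_le_Suc0_iff_eq not_less_eq_eq numeral_2_eq_2)

lemma divers_geI:
  assumes "finite S" and "2 \<le> card S"
    and "\<And>u v. u \<in> S \<Longrightarrow> v \<in> S \<Longrightarrow> u \<noteq> v \<Longrightarrow> r \<le> d u v"
  shows "r \<le> divers d S"
proof -
  obtain u v where "u \<in> S" "v \<in> S" "u \<noteq> v"
    using assms(1,2) by (rule obtain_distinct_pair)
  then show ?thesis
    unfolding divers_def using assms
    by (intro Min.boundedI finite_pair_distances) auto
qed

lemma opt_div_attained:
  assumes "finite U" and "k \<le> card U"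
  obtains T where "T \<subseteq> U" "card T = k" "divers d T = opt_div U d k"
proof -
  have "{divers d T | T. T \<subseteq> U \<and> card T = k} \<subseteq> divers d ` Pow U"
    by auto
  then have "finite {divers d T | T. T \<subseteq> U \<and> card T = k}"
    using assms(1) by (meson finite_Pow_iff finite_imageI finite_subset)
  moreover obtain T where "T \<subseteq> U" "card T = k"
    using assms(2) by (meson obtain_subset_with_card_n)
  ultimately have "opt_div U d k \<in> {divers d T | T. T \<subseteq> U \<and> card T = k}"
    unfolding opt_div_def by (intro Max_in) auto
  then show ?thesis
    using that by auto
qed

lemma R_prime_le:
  assumes "finite U" "u \<in> U" "v \<in> U" "u \<noteq> v" "opt_div U d k / 3 \<le> d u v"
  shows "R_prime U d k \<le> d u v"
  unfolding R_prime_def using assms by (intro Min_le finite_pair_distances) auto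

lemma R_prime_ge_third:
  assumes "asym_pseudometric U d" and "2 \<le> k" "k \<le> card U" and "0 < opt_div U d k"
  shows "opt_div U d k / 3 \<le> R_prime U d k"
proof -
  have "finite U"
    using assms(1) by (simp add: asym_pseudometric_def)
  then obtain T where T: "T \<subseteq> U" "card T = k" "divers d T = opt_div U d k"
    using assms(3) by (rule opt_div_attained)
  then have "finite T"
    using \<open>finite U\<close> finite_subset by blast
  then obtain u v where uv: "u \<in> T" "v \<in> T" "u \<noteq> v"
    using T(2) assms(2) by (metis obtain_distinct_pair)
  then have "opt_div U d k \<le> d u v"
    using T(3) divers_le[OF \<open>finite T\<close>] by metis
  then have "opt_div U d k / 3 \<le> d u v"
    using assms(4) by linarith
  then have "d u v \<in> {d u v | u v. u \<in> U \<and> v \<in> U \<and> u \<noteq> v \<and> opt_div U d k / 3 \<le> d u v}"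
    using uv T(1) by blast
  then show ?thesis
    unfolding R_prime_def using \<open>finite U\<close>
    by (intro Min.boundedI finite_pair_distances) auto
qed

lemma below_R_prime_imp_below_third:
  assumes "asym_pseudometric U d" and "0 < opt_div U d k"
    and "u \<in> U" "v \<in> U" "d u v < R_prime U d k"
  shows "d u v < opt_div U d k / 3"
proof (cases "u = v")
  case True
  then show ?thesis
    using assms by (simp add: asym_pseudometric_def)
next
  case False
  then show ?thesis
    using assms R_prime_le[of U u v d k] by (force simp: asym_pseudometric_def)
qed

lemma triangle_lower_bound:
  assumes "asym_pseudometric U d" and "x \<in> U" "y \<in> U" "x' \<in> U" "y' \<in> U"
    and "\<rho> \<le> d x y" "d x x' < \<rho> / 3" "d y' y < \<rho> / 3"
  shows "\<rho> / 3 < d x' y'"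
proof -
  have "d x y \<le> d x x' + d x' y" "d x' y \<le> d x' y' + d y' y"
    using assms(1-5) unfolding asym_pseudometric_def by blast+
  then show ?thesis
    using assms(6-8) by linarith
qed

lemma cluster_output_diverse_subset:
  assumes metric: "asym_pseudometric U d"
    and "2 \<le> k" "k \<le> card U" and pos: "0 < opt_div U d k"
    and "R \<le> R_prime U d k" and out: "cluster_output U d R U'"
  shows "\<exists>S \<subseteq> U'. card S = k \<and> R_prime U d k \<le> divers d S"
proof -
  let ?R' = "R_prime U d k" and ?Ropt = "opt_div U d k"
  have "finite U" and d_self: "\<forall>u\<in>U. d u u = 0"
    using metric by (simp_all add: asym_pseudometric_def)
  obtain T where T: "T \<subseteq> U" "card T = k" "divers d T = ?Ropt"
    using \<open>finite U\<close> assms(3) by (rule opt_div_attained)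
  have "finite T"
    using T(1) \<open>finite U\<close> finite_subset by blast
  have "\<forall>v\<in>U. \<exists>c. c \<in> U' \<and> dmax d c v < R"
    using cluster_output_covers[OF out] by blast
  then obtain f where f: "\<forall>v\<in>U. f v \<in> U' \<and> dmax d (f v) v < R"
    by metis
  have fU: "f v \<in> U" if "v \<in> U" for v
    using f cluster_output_subset[OF out] that by blast
  have near: "d v (f v) < ?Ropt / 3 \<and> d (f v) v < ?Ropt / 3" if "v \<in> U" for v
  proof -
    have "d v (f v) < ?R'" "d (f v) v < ?R'"
      using f that assms(5) unfolding dmax_def by fastforce+
    then show ?thesis
      using below_R_prime_imp_below_third[OF metric pos] that fU[OF that] by blast
  qed
  have far: "?Ropt / 3 < d (f x) (f y)" if "x \<in> T" "y \<in> T" "x \<noteq> y" for x y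
  proof -
    have x: "x \<in> U" and y: "y \<in> U"
      using that T(1) by auto
    have "?Ropt \<le> d x y"
      using divers_le[where d = d, OF \<open>finite T\<close> that] T(3) by simp
    then show ?thesis
      using triangle_lower_bound[OF metric x y fU[OF x] fU[OF y]] near[OF x] near[OF y] by blast
  qed
  have "inj_on f T"
  proof (rule inj_onI, rule ccontr)
    fix x y assume "x \<in> T" "y \<in> T" "f x = f y" "x \<noteq> y"
    moreover have "f x \<in> U"
      using fU T(1) \<open>x \<in> T\<close> by blast
    ultimately have "d (f x) (f y) = 0"
      using d_self by simp
    then show False
      using far[OF \<open>x \<in> T\<close> \<open>y \<in> T\<close> \<open>x \<noteq> y\<close>] pos by linarith
  qed
  then have card_image: "card (f ` T) = k"
    using T(2) by (simp add: card_image)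
  have "?R' \<le> divers d (f ` T)"
  proof (rule divers_geI)
    fix a b assume "a \<in> f ` T" "b \<in> f ` T" "a \<noteq> b"
    then obtain x y where xy: "x \<in> T" "y \<in> T" "x \<noteq> y" and "a = f x" "b = f y"
      by auto
    then have "a \<in> U" "b \<in> U" and "?Ropt / 3 < d a b"
      using fU T(1) far[OF xy] by auto
    then show "?R' \<le> d a b"
      using R_prime_le[OF \<open>finite U\<close> _ _ \<open>a \<noteq> b\<close>] by fastforce
  qed (use \<open>finite T\<close> card_image assms(2) in auto)
  moreover have "f ` T \<subseteq> U'"
    using f T(1) by auto
  ultimately show ?thesis
    using card_image by blast
qed

theorem corollary5p3:
  fixes U :: "'a set" and d :: "'a \<Rightarrow> 'a \<Rightarrow> real" and k :: nat and R :: real and U' :: "'a set"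
  assumes "asym_pseudometric U d"
    and "k \<ge> 2" and "k \<le> card U"
    and "opt_div U d k > 0"
    and "R > 0"
    and "cluster_output U d R U'"
  shows "(\<forall>u\<in>U'. \<forall>v\<in>U'. u \<noteq> v \<longrightarrow> dmax d u v \<ge> R) \<and>
         (R \<le> R_prime U d k \<longrightarrow>
            (\<exists>S \<subseteq> U'. card S = k \<and> divers d S \<ge> R_prime U d k \<and>
                       R_prime U d k \<ge> opt_div U d k / 3))"
  using cluster_output_separated[OF assms(6)]
    cluster_output_diverse_subset[OF assms(1-4) _ assms(6)]
    R_prime_ge_third[OF assms(1-4)]
  by blast

end
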